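(* Let $k$ be an algebraically closed field of characteristic $p\ge0$, $n\ge1$, and let $\pi : \mathrm{GL}(n,k)\to\mathrm{PGL}(n,k)$ be the natural surjection. The map $\varpi : \mathrm{Hom}_{\mathrm{alg.gr}}(\mathbb{G}_a,\mathrm{GL}(n,k))\to\mathrm{Hom}_{\mathrm{alg.gr}}(\mathbb{G}_a,\mathrm{PGL}(n,k))$, $\varpi(\varphi) = \pi\circ\varphi$, is bijective.
   Context: $\mathbb{G}_a$ denotes the additive group of $k$; $\mathrm{Hom}_{\mathrm{alg.gr}}$ denotes the set of homomorphisms of algebraic groups. *)

theory Defs
  imports "HOL-Analysis.Analysis" "HOL-Computational_Algebra.Polynomial"
begin

(* n x n matrices over k: 'k^'n^'n, with 'n a finite (nonempty) index type, n = CARD('n) >= 1 *)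

definition hom_poly_fun :: "nat \<Rightarrow> ('k::field^'n::finite^'n \<Rightarrow> 'k) \<Rightarrow> bool" where
  "hom_poly_fun m F \<longleftrightarrow>
     (\<exists>S c. finite S \<and> (\<forall>\<alpha>\<in>S. (\<Sum>i\<in>UNIV. \<Sum>j\<in>UNIV. \<alpha> i j) = m) \<and>
        F = (\<lambda>M. \<Sum>\<alpha>\<in>S. c \<alpha> * (\<Prod>i\<in>UNIV. \<Prod>j\<in>UNIV. (M $ i $ j) ^ (\<alpha> i j))))"

definition polyfun_k :: "('k::field \<Rightarrow> 'k) \<Rightarrow> bool" where
  "polyfun_k f \<longleftrightarrow> (\<exists>q. \<forall>t. f t = poly q t)"

text \<open>Homomorphisms of algebraic groups G_a -> GL(n,k): group homomorphisms (k,+) -> GL(n,k)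
  that are morphisms of varieties, i.e. pull back the coordinate ring k[x_ij, 1/det] to k[t].\<close>
definition hom_Ga_GL :: "('k::field \<Rightarrow> 'k^'n::finite^'n) set" where
  "hom_Ga_GL = {\<phi>. (\<forall>t. invertible (\<phi> t)) \<and>
      (\<forall>s t. \<phi> (s + t) = \<phi> s ** \<phi> t) \<and>
      (\<forall>i j. polyfun_k (\<lambda>t. \<phi> t $ i $ j)) \<and>
      polyfun_k (\<lambda>t. inverse (det (\<phi> t)))}"

text \<open>PGL(n,k) = GL(n,k) / scalars; elements are the cosets k^* M.\<close>
definition pgl_class :: "'k::field^'n::finite^'n \<Rightarrow> ('k^'n^'n) set" where
  "pgl_class M = {(\<chi> i j. c * M $ i $ j) | c. c \<noteq> 0}"

definition PGL :: "('k::field^'n::finite^'n) set set" where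
  "PGL = pgl_class ` {M. invertible M}"

definition pgl_mult :: "('k::field^'n::finite^'n) set \<Rightarrow> ('k^'n^'n) set \<Rightarrow> ('k^'n^'n) set" where
  "pgl_mult X Y = {A ** B | A B. A \<in> X \<and> B \<in> Y}"

text \<open>Homomorphisms of algebraic groups G_a -> PGL(n,k): group homomorphisms that are morphisms
  of varieties, i.e. every regular function on PGL(n,k) -- of the form P(A)/det(A)^d with P
  homogeneous of degree d*n in the entries -- pulls back to a polynomial in t.\<close>
definition hom_Ga_PGL :: "('k::field \<Rightarrow> ('k^'n::finite^'n) set) set" where
  "hom_Ga_PGL = {\<psi>. (\<forall>t. \<psi> t \<in> PGL) \<and>
      (\<forall>s t. \<psi> (s + t) = pgl_mult (\<psi> s) (\<psi> t)) \<and>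
      (\<forall>d P. hom_poly_fun (d * CARD('n)) P \<longrightarrow>
         (\<exists>q. \<forall>t. \<forall>A\<in>\<psi> t. P A / det A ^ d = poly q t))}"

definition varpi :: "('k::field \<Rightarrow> 'k^'n::finite^'n) \<Rightarrow> ('k \<Rightarrow> ('k^'n^'n) set)" where
  "varpi \<phi> = (\<lambda>t. pgl_class (\<phi> t))"

end

(*
  Injectivity: two lifts of the same homomorphism into PGL(n) differ by a scalar function z with
  z(t)^n = 1, because the determinant of a homomorphism G_a -> GL(n) is a nowhere vanishing
  polynomial, hence constant 1. A polynomial curve that takes its scalar ratios in a finite set
  has a constant ratio, and z(0) = 1.

  Surjectivity: the regular functions A_ij A_kl^(n-1) / det A on PGL(n) pull back along psi to
  polynomials Q_ijkl. For fixed (k, l) the matrix (Q_ijkl)_ij is a polynomial multiple of a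
  representative of psi(t); dividing out the common factor of its entries yields a polynomial
  matrix b(t) whose entries have no common zero and which still satisfies
  b_ij b_kl^(n-1) = det b * Q_ijkl. These identities force b(t) to represent psi(t), with
  det b(t) <> 0 for all t, so det b is a constant c. Now b(s) b(t) = z b(s + t) with z^n = c,
  so z takes finitely many values and is therefore constant; b / z is the required lift.
*)
theory Submission
  imports Defs
begin

section \<open>Scalar multiples of matrices and points of PGL(n)\<close>

definition smult_mat :: "'k::field \<Rightarrow> 'k^'n::finite^'n \<Rightarrow> 'k^'n^'n" where
  "smult_mat c M = (\<chi> i j. c * M $ i $ j)"

lemma smult_mat_nth [simp]: "smult_mat c M $ i $ j = c * M $ i $ j"
  by (simp add: smult_mat_def)

lemma smult_mat_eq_mat_mult: "smult_mat c M = mat c ** M"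
  by (simp add: vec_eq_iff matrix_matrix_mult_def mat_def if_distrib if_distribR sum.delta'
      cong: if_cong)

lemma det_smult_mat: "det (smult_mat c (M::'k::field^'n::finite^'n)) = c ^ CARD('n) * det M"
proof -
  have "det (mat c :: 'k^'n^'n) = c ^ CARD('n)"
    by (subst det_diagonal) (auto simp: mat_def)
  then show ?thesis by (simp add: smult_mat_eq_mat_mult det_mul)
qed

lemma smult_mat_mult_smult_mat: "smult_mat c A ** smult_mat d B = smult_mat (c * d) (A ** B)"
  by (simp add: vec_eq_iff matrix_matrix_mult_def sum_distrib_left mult_ac)

lemma smult_mat_smult_mat [simp]: "smult_mat c (smult_mat d A) = smult_mat (c * d) A"
  by (simp add: vec_eq_iff mult_ac)

lemma smult_mat_1 [simp]: "smult_mat 1 A = A"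
  by (simp add: vec_eq_iff)

lemma smult_mat_mult_left: "smult_mat c A ** B = smult_mat c (A ** B)"
  using smult_mat_mult_smult_mat[of c A 1 B] by simp

lemma smult_mat_mult_right: "A ** smult_mat c B = smult_mat c (A ** B)"
  using smult_mat_mult_smult_mat[of 1 A c B] by simp

lemma pgl_class_eq: "pgl_class M = {smult_mat c M | c. c \<noteq> 0}"
  by (simp add: pgl_class_def smult_mat_def)

lemma pgl_class_memE:
  assumes "A \<in> pgl_class M"
  obtains c where "c \<noteq> 0" "A = smult_mat c M"
  using assms unfolding pgl_class_eq by blast

lemma smult_mat_mem_pgl_class: "c \<noteq> 0 \<Longrightarrow> smult_mat c M \<in> pgl_class M"
  unfolding pgl_class_eq by blast

lemma pgl_class_self: "M \<in> pgl_class M"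
  using smult_mat_mem_pgl_class[of 1 M] by simp

lemma pgl_class_smult_mat:
  assumes "c \<noteq> 0"
  shows "pgl_class (smult_mat c M) = pgl_class M"
  unfolding pgl_class_eq
proof (intro equalityI subsetI)
  fix X assume "X \<in> {smult_mat d (smult_mat c M) |d. d \<noteq> 0}"
  then show "X \<in> {smult_mat d M |d. d \<noteq> 0}" using assms by force
next
  fix X assume "X \<in> {smult_mat d M |d. d \<noteq> 0}"
  then obtain d where "d \<noteq> 0" "X = smult_mat d M" by blast
  then show "X \<in> {smult_mat d (smult_mat c M) |d. d \<noteq> 0}"
    using assms by (intro CollectI exI[of _ "d / c"]) simp
qed

lemma pgl_mult_pgl_class: "pgl_mult (pgl_class A) (pgl_class B) = pgl_class (A ** B)"
proof (intro equalityI subsetI)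
  fix X assume "X \<in> pgl_mult (pgl_class A) (pgl_class B)"
  then obtain c d where "c \<noteq> 0" "d \<noteq> 0" "X = smult_mat (c * d) (A ** B)"
    unfolding pgl_mult_def pgl_class_eq by (auto simp: smult_mat_mult_smult_mat)
  then show "X \<in> pgl_class (A ** B)" by (simp add: smult_mat_mem_pgl_class)
next
  fix X assume "X \<in> pgl_class (A ** B)"
  then obtain c where "c \<noteq> 0" "X = smult_mat c A ** B"
    unfolding pgl_class_eq by (auto simp: smult_mat_mult_left)
  then show "X \<in> pgl_mult (pgl_class A) (pgl_class B)"
    unfolding pgl_mult_def using smult_mat_mem_pgl_class pgl_class_self by blast
qed

lemma PGL_memD:
  assumes "X \<in> PGL" "A \<in> X"
  shows "X = pgl_class A" "det A \<noteq> 0"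
proof -
  obtain M where M: "invertible M" "X = pgl_class M" using assms(1) unfolding PGL_def by blast
  then obtain c where "c \<noteq> 0" "A = smult_mat c M" using assms(2) by (auto elim: pgl_class_memE)
  then show "X = pgl_class A" "det A \<noteq> 0"
    using M by (simp_all add: pgl_class_smult_mat det_smult_mat invertible_det_nz)
qed

lemma nonzero_entry_if_det_nonzero:
  fixes M :: "'k::field^'n::finite^'n"
  assumes "det M \<noteq> 0"
  obtains i j where "M $ i $ j \<noteq> 0"
proof (rule ccontr)
  assume "\<not> thesis"
  then have "M = mat 0" using that by (auto simp: vec_eq_iff mat_def)
  then show False using assms det_0 by metis
qed

section \<open>Polynomial curves\<close>

definition polyfun_mat :: "('k::field \<Rightarrow> 'k^'n::finite^'n) \<Rightarrow> bool" where
  "polyfun_mat M \<longleftrightarrow> (\<forall>i j. polyfun_k (\<lambda>t. M t $ i $ j))"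

lemma polyfun_k_poly: "polyfun_k (poly q)"
  unfolding polyfun_k_def by blast

lemma polyfun_k_const: "polyfun_k (\<lambda>t. c)"
  unfolding polyfun_k_def by (intro exI[of _ "[:c:]"]) simp

lemma polyfun_k_diff: "polyfun_k f \<Longrightarrow> polyfun_k g \<Longrightarrow> polyfun_k (\<lambda>t. f t - g t)"
  unfolding polyfun_k_def by (metis poly_diff)

lemma polyfun_k_mult: "polyfun_k f \<Longrightarrow> polyfun_k g \<Longrightarrow> polyfun_k (\<lambda>t. f t * g t)"
  unfolding polyfun_k_def by (metis poly_mult)

lemma polyfun_k_power: "polyfun_k f \<Longrightarrow> polyfun_k (\<lambda>t. f t ^ m)"
  unfolding polyfun_k_def by (metis poly_power)

lemma polyfun_k_shift:
  assumes "polyfun_k f"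
  shows "polyfun_k (\<lambda>t. f (s + t))"
proof -
  obtain q where "\<And>t. f t = poly q t" using assms unfolding polyfun_k_def by blast
  then have "f (s + t) = poly (pcompose q [:s, 1:]) t" for t by (simp add: poly_pcompose)
  then show ?thesis unfolding polyfun_k_def by blast
qed

lemma polyfun_k_sum:
  assumes "\<And>x. x \<in> A \<Longrightarrow> polyfun_k (f x)"
  shows "polyfun_k (\<lambda>t. \<Sum>x\<in>A. f x t)"
proof -
  obtain q where "\<forall>x\<in>A. \<forall>t. f x t = poly (q x) t"
    using assms unfolding polyfun_k_def by metis
  then have "(\<Sum>x\<in>A. f x t) = poly (\<Sum>x\<in>A. q x) t" for t
    by (simp add: poly_sum)
  then show ?thesis unfolding polyfun_k_def by blast
qed

lemma polyfun_k_prod: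
  assumes "\<And>x. x \<in> A \<Longrightarrow> polyfun_k (f x)"
  shows "polyfun_k (\<lambda>t. \<Prod>x\<in>A. f x t)"
proof -
  obtain q where "\<forall>x\<in>A. \<forall>t. f x t = poly (q x) t"
    using assms unfolding polyfun_k_def by metis
  then have "(\<Prod>x\<in>A. f x t) = poly (\<Prod>x\<in>A. q x) t" for t
    by (simp add: poly_prod)
  then show ?thesis unfolding polyfun_k_def by blast
qed

lemma polyfun_k_det: "polyfun_mat M \<Longrightarrow> polyfun_k (\<lambda>t. det (M t))"
  unfolding polyfun_mat_def det_def
  by (intro polyfun_k_sum polyfun_k_mult polyfun_k_const polyfun_k_prod) blast

lemma polyfun_mat_smult_mat: "polyfun_mat M \<Longrightarrow> polyfun_mat (\<lambda>t. smult_mat c (M t))"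
  unfolding polyfun_mat_def by (simp add: polyfun_k_mult polyfun_k_const)

lemma polyfun_mat_mult: "polyfun_mat A \<Longrightarrow> polyfun_mat B \<Longrightarrow> polyfun_mat (\<lambda>t. A t ** B t)"
  unfolding polyfun_mat_def matrix_matrix_mult_def
  by (simp add: polyfun_k_sum polyfun_k_mult)

lemma polyfun_mat_shift: "polyfun_mat M \<Longrightarrow> polyfun_mat (\<lambda>t. M (s + t))"
  unfolding polyfun_mat_def by (auto dest: polyfun_k_shift)

lemma polyfun_mat_const: "polyfun_mat (\<lambda>t. M)"
  unfolding polyfun_mat_def by (simp add: polyfun_k_const)

lemma infinite_UNIV_alg_closed: "infinite (UNIV :: 'k::alg_closed_field set)"
proof
  assume fin: "finite (UNIV :: 'k set)"
  define p :: "'k poly" where "p = (\<Prod>a\<in>UNIV. [:-a, 1:]) + 1"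
  have "degree (\<Prod>a\<in>(UNIV::'k set). [:-a, 1:]) = card (UNIV :: 'k set)"
    by (subst degree_prod_eq_sum_degree) auto
  moreover have "card (UNIV :: 'k set) > 0" using fin by (simp add: card_gt_0_iff)
  ultimately have "degree p > 0" unfolding p_def by (subst degree_add_eq_left) auto
  then obtain x where "poly p x = 0" using alg_closed_imp_poly_has_root by blast
  moreover have "poly (\<Prod>a\<in>(UNIV::'k set). [:-a, 1:]) x = 0"
    unfolding poly_prod using fin by (intro prod_zero) auto
  ultimately show False unfolding p_def by simp
qed

lemma polyfun_k_eq_0_if_infinite_zeros:
  assumes "polyfun_k f" "infinite {t. f t = 0}"
  shows "f t = 0"
proof -
  obtain q where q: "f = poly q" using assms(1) unfolding polyfun_k_def by blast
  then have "q = 0" using assms(2) poly_roots_finite[of q] by blast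
  then show ?thesis by (simp add: q)
qed

lemma polyfun_k_eq_0_if_mult_poly_eq_0:
  fixes f :: "'k::field \<Rightarrow> 'k"
  assumes "infinite (UNIV :: 'k set)" "polyfun_k f" "h \<noteq> 0" "\<And>t. poly h t * f t = 0"
  shows "f t = 0"
proof (rule polyfun_k_eq_0_if_infinite_zeros[OF assms(2)])
  have "UNIV - {t. poly h t = 0} \<subseteq> {t. f t = 0}" using assms(4) by auto
  moreover have "finite {t. poly h t = 0}" using poly_roots_finite assms(3) by blast
  ultimately show "infinite {t. f t = 0}"
    using assms(1) by (meson Diff_infinite_finite infinite_super)
qed

lemma polyfun_k_nonvanishing_const:
  fixes f :: "'k::alg_closed_field \<Rightarrow> 'k"
  assumes "polyfun_k f" "\<And>t. f t \<noteq> 0"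
  obtains c where "\<And>t. f t = c"
proof -
  obtain q where q: "f = poly q" using assms(1) unfolding polyfun_k_def by blast
  then have "degree q = 0" using alg_closed_imp_poly_has_root[of q] assms(2) by auto
  then obtain c where "q = [:c:]" by (rule degree_eq_zeroE)
  then show ?thesis using that q by simp
qed

lemma finite_nth_roots: "0 < m \<Longrightarrow> finite {z :: 'k::field. z ^ m = a}"
proof -
  assume m: "0 < m"
  define p :: "'k poly" where "p = monom 1 m - [:a:]"
  have "coeff p m = 1" using m by (simp add: p_def coeff_pCons split: nat.split)
  then have "p \<noteq> 0" by auto
  moreover have "{z. z ^ m = a} = {z. poly p z = 0}" by (auto simp: p_def poly_monom)
  ultimately show ?thesis using poly_roots_finite by simp
qed

text \<open>One of the finitely many ratios is attained for infinitely many \<open>t\<close>.\<close>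
lemma polyfun_mat_proportional_const:
  fixes F G :: "'k::field \<Rightarrow> 'k^'n::finite^'n"
  assumes "infinite (UNIV :: 'k set)" "finite Z" "polyfun_mat F" "polyfun_mat G"
    and "\<And>t. \<exists>z\<in>Z. F t = smult_mat z (G t)"
  obtains z where "z \<in> Z" "\<And>t. F t = smult_mat z (G t)"
proof -
  have "UNIV = (\<Union>z\<in>Z. {t. F t = smult_mat z (G t)})" using assms(5) by blast
  then have "infinite (\<Union>z\<in>Z. {t. F t = smult_mat z (G t)})" using assms(1) by simp
  then obtain z where z: "z \<in> Z" "infinite {t. F t = smult_mat z (G t)}"
    using assms(2) by blast
  have "F t $ i $ j - z * G t $ i $ j = 0" for t i j
  proof (rule polyfun_k_eq_0_if_infinite_zeros[where f = "\<lambda>t. F t $ i $ j - z * G t $ i $ j"])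
    show "polyfun_k (\<lambda>t. F t $ i $ j - z * G t $ i $ j)"
      using assms(3,4) unfolding polyfun_mat_def by (intro polyfun_k_diff polyfun_k_mult polyfun_k_const) auto
    show "infinite {t. F t $ i $ j - z * G t $ i $ j = 0}"
      using z(2) by (rule infinite_super[rotated]) auto
  qed
  then show ?thesis using that z(1) by (simp add: vec_eq_iff)
qed

section \<open>Homogeneous polynomial functions\<close>

lemma hom_poly_fun_smult_mat:
  assumes "hom_poly_fun m P"
  shows "P (smult_mat c M) = c ^ m * P M"
proof -
  obtain S a where S: "\<forall>\<alpha>\<in>S. (\<Sum>i\<in>UNIV. \<Sum>j\<in>UNIV. \<alpha> i j) = m"
    and P: "P = (\<lambda>M. \<Sum>\<alpha>\<in>S. a \<alpha> * (\<Prod>i\<in>UNIV. \<Prod>j\<in>UNIV. (M $ i $ j) ^ (\<alpha> i j)))"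
    using assms unfolding hom_poly_fun_def by blast
  have "(\<Prod>i\<in>UNIV. \<Prod>j\<in>UNIV. (c * M $ i $ j) ^ (\<alpha> i j))
      = c ^ m * (\<Prod>i\<in>UNIV. \<Prod>j\<in>UNIV. (M $ i $ j) ^ (\<alpha> i j))" if "\<alpha> \<in> S" for \<alpha>
  proof -
    have "(\<Prod>i\<in>UNIV. \<Prod>j\<in>UNIV. (c * M $ i $ j) ^ (\<alpha> i j))
        = (\<Prod>i\<in>UNIV. \<Prod>j\<in>UNIV. c ^ (\<alpha> i j)) * (\<Prod>i\<in>UNIV. \<Prod>j\<in>UNIV. (M $ i $ j) ^ (\<alpha> i j))"
      by (simp add: power_mult_distrib prod.distrib)
    also have "(\<Prod>i\<in>UNIV. \<Prod>j\<in>UNIV. c ^ (\<alpha> i j)) = c ^ (\<Sum>i\<in>UNIV. \<Sum>j\<in>UNIV. \<alpha> i j)"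
      by (simp add: power_sum)
    finally show ?thesis using S that by simp
  qed
  then show ?thesis unfolding P
    by (simp add: sum_distrib_left mult_ac cong: sum.cong)
qed

lemma polyfun_k_hom_poly_fun:
  assumes "hom_poly_fun m P" "polyfun_mat M"
  shows "polyfun_k (\<lambda>t. P (M t))"
proof -
  obtain S a where "P = (\<lambda>M. \<Sum>\<alpha>\<in>S. a \<alpha> * (\<Prod>i\<in>UNIV. \<Prod>j\<in>UNIV. (M $ i $ j) ^ (\<alpha> i j)))"
    using assms(1) unfolding hom_poly_fun_def by blast
  then show ?thesis using assms(2) unfolding polyfun_mat_def
    by (simp add: polyfun_k_sum polyfun_k_mult polyfun_k_const polyfun_k_prod polyfun_k_power)
qed

lemma hom_poly_fun_monomial:
  "hom_poly_fun (Suc r) (\<lambda>A::'k::field^'n::finite^'n. A $ a $ b * A $ k $ l ^ r)"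
proof -
  define \<beta> where "\<beta> p = (if p = (a, b) then 1 else 0) + (if p = (k, l) then r else 0)" for p
  have "(\<Sum>i\<in>UNIV. \<Sum>j\<in>UNIV. \<beta> (i, j)) = (\<Sum>p\<in>UNIV. \<beta> p)"
    by (simp add: sum.cartesian_product)
  also have "\<dots> = Suc r"
    by (simp add: \<beta>_def sum.distrib)
  finally have deg: "(\<Sum>i\<in>UNIV. \<Sum>j\<in>UNIV. \<beta> (i, j)) = Suc r" .
  have "(\<Prod>i\<in>UNIV. \<Prod>j\<in>UNIV. (A $ i $ j) ^ \<beta> (i, j)) = (\<Prod>p\<in>UNIV. (A $ fst p $ snd p) ^ \<beta> p)"
    for A :: "'k^'n^'n"
    by (simp add: prod.cartesian_product case_prod_beta)
  also have "\<dots> A = A $ a $ b * A $ k $ l ^ r" for A :: "'k^'n^'n"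
    by (simp add: \<beta>_def power_add prod.distrib if_distrib[of "\<lambda>e. _ ^ e"] cong: if_cong)
  finally show ?thesis unfolding hom_poly_fun_def using deg
    by (intro exI[of _ "{\<lambda>i j. \<beta> (i, j)}"] exI[of _ "\<lambda>_. 1"]) simp
qed

section \<open>Homomorphisms into GL(n)\<close>

lemma hom_Ga_GL_D:
  assumes "\<phi> \<in> hom_Ga_GL"
  shows "invertible (\<phi> t)" "\<phi> (s + t) = \<phi> s ** \<phi> t" "polyfun_mat \<phi>"
  using assms unfolding hom_Ga_GL_def polyfun_mat_def by blast+

lemma hom_Ga_GL_zero:
  assumes "\<phi> \<in> hom_Ga_GL"
  shows "\<phi> 0 = mat 1"
proof -
  obtain B where B: "\<phi> 0 ** B = mat 1" using hom_Ga_GL_D(1)[OF assms] unfolding invertible_def by blast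
  have "mat 1 = (\<phi> 0 ** \<phi> 0) ** B" using hom_Ga_GL_D(2)[OF assms, of 0 0] B by simp
  also have "\<dots> = \<phi> 0" by (simp add: matrix_mul_assoc[symmetric] B)
  finally show ?thesis by simp
qed

lemma det_hom_Ga_GL:
  fixes \<phi> :: "'k::alg_closed_field \<Rightarrow> 'k^'n::finite^'n"
  assumes "\<phi> \<in> hom_Ga_GL"
  shows "det (\<phi> t) = 1"
proof -
  have "det (\<phi> t) \<noteq> 0" for t using hom_Ga_GL_D(1)[OF assms] invertible_det_nz by blast
  then obtain c where c: "\<And>t. det (\<phi> t) = c"
    using polyfun_k_nonvanishing_const polyfun_k_det[OF hom_Ga_GL_D(3)[OF assms]] by blast
  then show ?thesis using c[of 0] hom_Ga_GL_zero[OF assms] by simp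
qed

lemma varpi_mem_hom_Ga_PGL:
  fixes \<phi> :: "'k::alg_closed_field \<Rightarrow> 'k^'n::finite^'n"
  assumes "\<phi> \<in> hom_Ga_GL"
  shows "varpi \<phi> \<in> hom_Ga_PGL"
proof -
  have "pgl_class (\<phi> t) \<in> PGL" for t
    unfolding PGL_def using hom_Ga_GL_D(1)[OF assms] by blast
  moreover have "pgl_class (\<phi> (s + t)) = pgl_mult (pgl_class (\<phi> s)) (pgl_class (\<phi> t))" for s t
    by (simp add: pgl_mult_pgl_class hom_Ga_GL_D(2)[OF assms])
  moreover have "\<exists>q. \<forall>t. \<forall>A\<in>pgl_class (\<phi> t). P A / det A ^ d = poly q t"
    if P: "hom_poly_fun (d * CARD('n)) P" for d P
  proof -
    obtain q where q: "\<And>t. P (\<phi> t) = poly q t"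
      using polyfun_k_hom_poly_fun[OF P hom_Ga_GL_D(3)[OF assms]] unfolding polyfun_k_def by blast
    have "P A / det A ^ d = poly q t" if A: "A \<in> pgl_class (\<phi> t)" for t A
    proof -
      obtain c where c: "c \<noteq> 0" "A = smult_mat c (\<phi> t)" using A by (rule pgl_class_memE)
      then have "P A = (c ^ CARD('n)) ^ d * P (\<phi> t)" "det A ^ d = (c ^ CARD('n)) ^ d"
        by (simp_all add: hom_poly_fun_smult_mat[OF P] det_smult_mat det_hom_Ga_GL[OF assms]
            flip: power_mult) (simp add: mult.commute)
      then show ?thesis using c(1) by (simp add: q)
    qed
    then show ?thesis by blast
  qed
  ultimately show ?thesis unfolding hom_Ga_PGL_def varpi_def mem_Collect_eq by (intro conjI allI impI)
qed

lemma inj_on_varpi: "inj_on (varpi :: ('k::alg_closed_field \<Rightarrow> 'k^'n::finite^'n) \<Rightarrow> _) hom_Ga_GL"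
proof (rule inj_onI)
  fix \<phi> \<phi>' :: "'k \<Rightarrow> 'k^'n^'n"
  assume \<phi>: "\<phi> \<in> hom_Ga_GL" and \<phi>': "\<phi>' \<in> hom_Ga_GL" and eq: "varpi \<phi> = varpi \<phi>'"
  have "\<exists>z\<in>{z. z ^ CARD('n) = 1}. \<phi>' t = smult_mat z (\<phi> t)" for t
  proof -
    have "\<phi>' t \<in> pgl_class (\<phi> t)"
      using fun_cong[OF eq, of t] pgl_class_self[of "\<phi>' t"] unfolding varpi_def by simp
    then obtain c where c: "c \<noteq> 0" "\<phi>' t = smult_mat c (\<phi> t)" by (rule pgl_class_memE)
    then have "det (\<phi>' t) = c ^ CARD('n) * det (\<phi> t)" by (simp add: det_smult_mat)
    then have "c ^ CARD('n) = 1" by (simp add: det_hom_Ga_GL[OF \<phi>] det_hom_Ga_GL[OF \<phi>'])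
    then show ?thesis using c by blast
  qed
  then obtain z where z: "\<And>t. \<phi>' t = smult_mat z (\<phi> t)"
    using polyfun_mat_proportional_const[OF infinite_UNIV_alg_closed
        finite_nth_roots[OF zero_less_card_finite] hom_Ga_GL_D(3)[OF \<phi>'] hom_Ga_GL_D(3)[OF \<phi>]]
    by blast
  have "smult_mat z (mat 1) = (mat 1 :: 'k^'n^'n)"
    using z[of 0] hom_Ga_GL_zero[OF \<phi>] hom_Ga_GL_zero[OF \<phi>'] by simp
  then have "smult_mat z (mat 1) $ i $ i = (mat 1 :: 'k^'n^'n) $ i $ i" for i by simp
  then have "z = 1" by (simp add: mat_def)
  then show "\<phi> = \<phi>'" using z by (simp add: fun_eq_iff)
qed

section \<open>Lifting homomorphisms into PGL(n)\<close>

lemma poly_common_factor_no_common_root: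
  fixes p :: "'i \<Rightarrow> 'k::field poly"
  assumes "p i0 \<noteq> 0"
  shows "\<exists>h b. h \<noteq> 0 \<and> (\<forall>i. p i = h * b i) \<and> (\<forall>t. \<exists>i. poly (b i) t \<noteq> 0)"
  using assms
proof (induction "degree (p i0)" arbitrary: p rule: less_induct)
  case less
  show ?case
  proof (cases "\<exists>t. \<forall>i. poly (p i) t = 0")
    case False
    then show ?thesis by (intro exI[of _ 1] exI[of _ p]) auto
  next
    case True
    then obtain t where t: "\<And>i. poly (p i) t = 0" by blast
    define p' where "p' i = p i div [:-t, 1:]" for i
    have p_eq: "p i = [:-t, 1:] * p' i" for i
      using t[of i] unfolding p'_def poly_eq_0_iff_dvd by (rule dvd_mult_div_cancel[symmetric])
    then have "p' i0 \<noteq> 0" using less.prems by auto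
    moreover have "degree (p' i0) < degree (p i0)"
      using p_eq[of i0] \<open>p' i0 \<noteq> 0\<close> by (simp add: degree_mult_eq del: mult_pCons_left)
    ultimately obtain h b where "h \<noteq> 0" "\<And>i. p' i = h * b i" "\<And>t. \<exists>i. poly (b i) t \<noteq> 0"
      using less.hyps by blast
    then show ?thesis using p_eq
      by (intro exI[of _ "[:-t, 1:] * h"] exI[of _ b]) (simp add: mult.assoc del: mult_pCons_left)
  qed
qed

lemma monomial_ratio_identity_smult_mat:
  fixes A :: "'k::field^'n::finite^'n"
  assumes "CARD('n) = Suc m" "det A \<noteq> 0"
  shows "smult_mat c A $ i $ j * smult_mat c A $ k $ l ^ m
      = det (smult_mat c A) * (A $ i $ j * A $ k $ l ^ m / det A)"
  using assms by (simp add: det_smult_mat power_mult_distrib)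

lemma smult_mat_if_monomial_ratio_identity:
  fixes A B :: "'k::field^'n::finite^'n"
  assumes "det A \<noteq> 0" "B $ k $ l \<noteq> 0"
    and B: "\<And>i j. B $ i $ j * B $ k $ l ^ m = det B * (A $ i $ j * A $ k $ l ^ m / det A)"
  shows "\<exists>c. c \<noteq> 0 \<and> B = smult_mat c A"
proof -
  define c where "c = det B * A $ k $ l ^ m / (det A * B $ k $ l ^ m)"
  have "B $ i $ j = c * A $ i $ j" for i j
    using B[of i j] assms(1,2) by (simp add: c_def field_simps)
  moreover from this have "c \<noteq> 0" using assms(2) by auto
  ultimately show ?thesis by (intro exI[of _ c]) (simp add: vec_eq_iff)
qed

lemma hom_Ga_PGL_D:
  fixes \<psi> :: "'k::field \<Rightarrow> ('k^'n::finite^'n) set"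
  assumes "\<psi> \<in> hom_Ga_PGL"
  shows "\<psi> t \<in> PGL" "\<psi> (s + t) = pgl_mult (\<psi> s) (\<psi> t)"
    and "hom_poly_fun (d * CARD('n)) P \<Longrightarrow> \<exists>q. \<forall>t. \<forall>A\<in>\<psi> t. P A / det A ^ d = poly q t"
  using assms unfolding hom_Ga_PGL_def by blast+

lemma monomial_ratio_identity_cancel_factor:
  fixes b :: "'k::field \<Rightarrow> 'k^'n::finite^'n"
  assumes "infinite (UNIV :: 'k set)" "CARD('n) = Suc m" "polyfun_mat b" "h \<noteq> 0"
    and "\<And>t. smult_mat (poly h t) (b t) $ i $ j * smult_mat (poly h t) (b t) $ k $ l ^ m
        = det (smult_mat (poly h t) (b t)) * poly q t"
  shows "b t $ i $ j * b t $ k $ l ^ m = det (b t) * poly q t"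
proof -
  have "polyfun_k (\<lambda>t. b t $ i $ j * b t $ k $ l ^ m - det (b t) * poly q t)"
    using assms(3) unfolding polyfun_mat_def
    by (intro polyfun_k_diff polyfun_k_mult polyfun_k_power polyfun_k_poly
        polyfun_k_det[OF assms(3)]) auto
  moreover have "h ^ Suc m \<noteq> 0" using assms(4) by simp
  moreover have "poly h t ^ Suc m * (b t $ i $ j * b t $ k $ l ^ m)
      = poly h t ^ Suc m * (det (b t) * poly q t)" for t
    using assms(5)[of t] by (simp add: det_smult_mat assms(2) power_mult_distrib mult_ac)
  then have "poly (h ^ Suc m) t * (b t $ i $ j * b t $ k $ l ^ m - det (b t) * poly q t) = 0" for t
    by (simp add: right_diff_distrib)
  ultimately have "b t $ i $ j * b t $ k $ l ^ m - det (b t) * poly q t = 0"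
    by (rule polyfun_k_eq_0_if_mult_poly_eq_0[OF assms(1)])
  then show ?thesis by simp
qed

lemma polynomial_representatives:
  fixes A :: "'k::field \<Rightarrow> 'k^'n::finite^'n"
  assumes "infinite (UNIV :: 'k set)" "CARD('n) = Suc m" and det_A: "\<And>t. det (A t) \<noteq> 0"
    and Q: "\<And>i j k l t. poly (Q i j k l) t = A t $ i $ j * A t $ k $ l ^ m / det (A t)"
  obtains b where "polyfun_mat b" "\<And>t. \<exists>c. c \<noteq> 0 \<and> b t = smult_mat c (A t)"
proof -
  obtain k0 l0 where "A 0 $ k0 $ l0 \<noteq> 0" using det_A[of 0] by (rule nonzero_entry_if_det_nonzero)
  then have "poly (Q k0 l0 k0 l0) 0 \<noteq> 0" using Q[of k0 l0 k0 l0 0] det_A[of 0] by simp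
  then have "Q k0 l0 k0 l0 \<noteq> 0" by auto
  then obtain h b' where h: "h \<noteq> 0" "\<forall>ij. (\<lambda>(i, j). Q i j k0 l0) ij = h * b' ij"
    and no_common_root: "\<forall>t. \<exists>ij. poly (b' ij) t \<noteq> 0"
    using poly_common_factor_no_common_root[of "\<lambda>(i, j). Q i j k0 l0" "(k0, l0)"] by auto
  define b where "b t = (\<chi> i j. poly (b' (i, j)) t)" for t
  have b_nth: "b t $ i $ j = poly (b' (i, j)) t" for t i j by (simp add: b_def)
  have polyfun_b: "polyfun_mat b" unfolding polyfun_mat_def b_nth by (simp add: polyfun_k_poly)
  have hb: "smult_mat (poly h t) (b t) = smult_mat (A t $ k0 $ l0 ^ m / det (A t)) (A t)" for t
    using Q[of _ _ k0 l0 t] h(2) by (simp add: vec_eq_iff b_nth mult_ac)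
  have identity: "b t $ i $ j * b t $ k $ l ^ m = det (b t) * poly (Q i j k l) t" for t i j k l
    using monomial_ratio_identity_smult_mat[OF assms(2) det_A]
    by (intro monomial_ratio_identity_cancel_factor[OF assms(1,2) polyfun_b h(1)])
      (simp only: hb Q)
  have "\<exists>c. c \<noteq> 0 \<and> b t = smult_mat c (A t)" for t
  proof -
    obtain i j where "b t $ i $ j \<noteq> 0"
      using spec[OF no_common_root, of t] unfolding b_nth by (metis surj_pair)
    then show ?thesis
      using smult_mat_if_monomial_ratio_identity[OF det_A] identity Q by metis
  qed
  with polyfun_b show ?thesis by (rule that)
qed

lemma hom_Ga_PGL_polynomial_lift:
  fixes \<psi> :: "'k::alg_closed_field \<Rightarrow> ('k^'n::finite^'n) set"
  assumes "\<psi> \<in> hom_Ga_PGL"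
  obtains b where "polyfun_mat b" "\<And>t. \<psi> t = pgl_class (b t)" "\<And>t. det (b t) \<noteq> 0"
proof -
  obtain m where m: "CARD('n) = Suc m" using zero_less_card_finite gr0_implies_Suc by blast
  have "\<exists>A. A \<in> \<psi> t" for t
    using hom_Ga_PGL_D(1)[OF assms] pgl_class_self unfolding PGL_def by blast
  then obtain A where A: "\<And>t. A t \<in> \<psi> t" by metis
  have \<psi>_eq: "\<psi> t = pgl_class (A t)" and det_A: "det (A t) \<noteq> 0" for t
    using PGL_memD[OF hom_Ga_PGL_D(1)[OF assms] A] by auto
  have "\<exists>q. \<forall>t. \<forall>A\<in>\<psi> t. A $ i $ j * A $ k $ l ^ m / det A = poly q t" for i j k l
    using hom_Ga_PGL_D(3)[OF assms, of 1] hom_poly_fun_monomial[of m i j k l] m by simp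
  then obtain Q where "\<And>i j k l t. poly (Q i j k l) t = A t $ i $ j * A t $ k $ l ^ m / det (A t)"
    using A by metis
  then obtain b where b: "polyfun_mat b" "\<And>t. \<exists>c. c \<noteq> 0 \<and> b t = smult_mat c (A t)"
    by (rule polynomial_representatives[where A = A, OF infinite_UNIV_alg_closed m det_A]) blast
  have "\<psi> t = pgl_class (b t)" "det (b t) \<noteq> 0" for t
    using b(2)[of t] \<psi>_eq det_A by (auto simp: pgl_class_smult_mat det_smult_mat)
  with b(1) show ?thesis by (rule that)
qed

lemma smult_mat_cocycle_const:
  fixes b :: "'a::monoid_add \<Rightarrow> 'k::field^'n::finite^'n"
  assumes Z: "\<And>s t. b s ** b t = smult_mat (Z s) (b (s + t))" and det: "\<And>t. det (b t) \<noteq> 0"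
  shows "Z s = Z 0" "Z 0 \<noteq> 0"
proof -
  obtain B where B: "b 0 ** B = mat 1" using det[of 0] invertible_det_nz unfolding invertible_def by blast
  have "b 0 = (b 0 ** b 0) ** B" using B by (simp add: matrix_mul_assoc[symmetric])
  also have "\<dots> = smult_mat (Z 0) (mat 1)" using Z[of 0 0] B by (simp add: smult_mat_mult_left)
  finally have b0: "b 0 = smult_mat (Z 0) (mat 1)" .
  then show "Z 0 \<noteq> 0" using det[of 0] by (auto simp: det_smult_mat)
  obtain i j where "b s $ i $ j \<noteq> 0" using det[of s] by (rule nonzero_entry_if_det_nonzero)
  moreover have "smult_mat (Z 0) (b s) = smult_mat (Z s) (b s)"
    using Z[of s 0] b0 by (simp add: smult_mat_mult_right)
  ultimately show "Z s = Z 0" by (metis mult_right_cancel smult_mat_nth)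
qed

lemma hom_Ga_GL_of_polynomial_lift:
  fixes \<psi> :: "'k::alg_closed_field \<Rightarrow> ('k^'n::finite^'n) set"
  assumes "\<psi> \<in> hom_Ga_PGL" "polyfun_mat b" "\<And>t. \<psi> t = pgl_class (b t)" "\<And>t. det (b t) \<noteq> 0"
  shows "\<exists>\<phi>\<in>hom_Ga_GL. varpi \<phi> = \<psi>"
proof -
  obtain c0 where c0: "\<And>t. det (b t) = c0"
    using polyfun_k_nonvanishing_const[OF polyfun_k_det[OF assms(2)] assms(4)] by blast
  have "\<exists>z\<in>{z. z ^ CARD('n) = c0}. b s ** b t = smult_mat z (b (s + t))" for s t
  proof -
    have "b s ** b t \<in> pgl_class (b (s + t))"
      using hom_Ga_PGL_D(2)[OF assms(1), of s t] pgl_class_self[of "b s ** b t"]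
      by (simp add: assms(3) pgl_mult_pgl_class)
    then obtain z where z: "b s ** b t = smult_mat z (b (s + t))" by (rule pgl_class_memE)
    then have "det (b s ** b t) = det (smult_mat z (b (s + t)))" by simp
    then have "c0 * c0 = z ^ CARD('n) * c0" by (simp add: det_mul det_smult_mat c0)
    then show ?thesis using z c0 assms(4) by auto
  qed
  then have "\<exists>z. \<forall>t. b s ** b t = smult_mat z (b (s + t))" for s
    using polyfun_mat_proportional_const[OF infinite_UNIV_alg_closed
        finite_nth_roots[OF zero_less_card_finite] polyfun_mat_mult[OF polyfun_mat_const assms(2)]
        polyfun_mat_shift[OF assms(2)]]
    by metis
  then obtain Z where Z: "\<And>s t. b s ** b t = smult_mat (Z s) (b (s + t))" by metis
  note Z_const = smult_mat_cocycle_const[OF Z assms(4)]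
  define \<phi> where "\<phi> t = smult_mat (1 / Z 0) (b t)" for t
  have "invertible (\<phi> t)" for t
    using Z_const(2) assms(4) by (simp add: \<phi>_def invertible_det_nz det_smult_mat)
  moreover have "\<phi> (s + t) = \<phi> s ** \<phi> t" for s t
    using Z_const(1)[of s] Z_const(2) by (simp add: \<phi>_def smult_mat_mult_smult_mat Z)
  moreover have "polyfun_mat \<phi>"
    unfolding \<phi>_def by (rule polyfun_mat_smult_mat[OF assms(2)])
  moreover have "polyfun_k (\<lambda>t. inverse (det (\<phi> t)))"
    by (simp add: \<phi>_def det_smult_mat c0 polyfun_k_const)
  ultimately have "\<phi> \<in> hom_Ga_GL" unfolding hom_Ga_GL_def polyfun_mat_def by blast
  moreover have "varpi \<phi> = \<psi>"
    using Z_const(2) by (simp add: fun_eq_iff varpi_def \<phi>_def pgl_class_smult_mat assms(3))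
  ultimately show ?thesis by blast
qed

theorem lemma1p6:
  shows "bij_betw (varpi :: ('k::alg_closed_field \<Rightarrow> 'k^'n::finite^'n) \<Rightarrow> _)
           hom_Ga_GL hom_Ga_PGL"
  unfolding bij_betw_def
proof
  show "inj_on (varpi :: ('k \<Rightarrow> 'k^'n^'n) \<Rightarrow> _) hom_Ga_GL"
    by (rule inj_on_varpi)
  have "\<psi> \<in> varpi ` hom_Ga_GL" if \<psi>: "\<psi> \<in> hom_Ga_PGL" for \<psi> :: "'k \<Rightarrow> ('k^'n^'n) set"
  proof -
    obtain b where "polyfun_mat b" "\<And>t. \<psi> t = pgl_class (b t)" "\<And>t. det (b t) \<noteq> 0"
      using hom_Ga_PGL_polynomial_lift[OF \<psi>] by blast
    then show ?thesis using hom_Ga_GL_of_polynomial_lift[OF \<psi>] by blast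
  qed
  then show "(varpi :: ('k \<Rightarrow> 'k^'n^'n) \<Rightarrow> _) ` hom_Ga_GL = hom_Ga_PGL"
    using varpi_mem_hom_Ga_PGL by blast
qed

end
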